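(* Let $a\geq 3$ and $m\geq 2a^2-a+2$ be integers. Every 2-coloring of $[C(m,a)]$ (with colors red and blue) in which both $a-2$ and $a-1$ are red admits a monochromatic solution of $L(m,a)$ in $[C(m,a)]$.
   Context: For integers $m\geq 3$, $a\geq 1$, $L(m,a)$ denotes the equation $x_1+x_2+\cdots+x_{m-1}=a x_m$. For a positive integer $n$, $[n]=\{1,\dots,n\}$. A solution of $L(m,a)$ in $[n]$ is an $m$-tuple $(x_1,\dots,x_m)\in[n]^m$ (entries not necessarily distinct) satisfying the equation; given a 2-coloring of $[n]$, it is monochromatic if all $x_i$ have the same color. $C(m,a)$ denotes $\left\lceil \frac{m-1}{a}\left\lceil \frac{m-1}{a}\right\rceil\right\rceil$. *)

theory Defs
  imports Complex_Main
begin

definition ceil_div :: "nat \<Rightarrow> nat \<Rightarrow> nat" where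
  "ceil_div p q = nat (ceiling (real p / real q))"

definition Cma :: "nat \<Rightarrow> nat \<Rightarrow> nat" where
  "Cma m a = nat (ceiling ((real (m - 1) / real a) * real (ceil_div (m - 1) a)))"

definition is_solution :: "nat \<Rightarrow> nat \<Rightarrow> nat \<Rightarrow> (nat \<Rightarrow> nat) \<Rightarrow> bool" where
  "is_solution m a n x \<longleftrightarrow> (\<forall>i<m. x i \<in> {1..n}) \<and> (\<Sum>i<m - 1. x i) = a * x (m - 1)"

text \<open>A 2-coloring is a map col :: nat => bool (True = red, False = blue), relevant on [n].
  A solution is monochromatic if all entries get the same color.\<close>
definition monochromatic :: "(nat \<Rightarrow> bool) \<Rightarrow> nat \<Rightarrow> (nat \<Rightarrow> nat) \<Rightarrow> bool" where
  "monochromatic col m x \<longleftrightarrow> (\<forall>i<m. \<forall>j<m. col (x i) = col (x j))"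

end

theory Submission imports Defs begin

(* Put k = m - 1, q = ceil(k/a) and C = Cma m a = ceil(kq/a), and
   suppose a red/blue colouring of [C] with a-2, a-1 red has no monochromatic solution of
   x_1 + ... + x_k = a x_{k+1}.  The basic tool is: if an interval [lo,hi] and two values w, z
   share a colour, then i copies of w plus k-i values from [lo,hi] can realise a*z as soon as
   i*w + (k-i)*lo <= a*z <= i*w + (k-i)*hi.  With it the colouring is forced step by step:
     (1) every y with k(a-2) <= a y <= k(a-1) is blue;
     (2) the interval [a-2, q-1] is red (induction, using (1) and a residue-class choice of y);
     (3) so is [1, a-2];
     (4) q and q+1 are blue, hence C is red;
     (5) finally C, C and [a-2, q-1] give a red solution -- a contradiction. *)

lemma solution_from_three_values:
  assumes ij: "i + j \<le> k"
    and range: "u1 \<in> {1..n}" "u2 \<in> {1..n}" "u3 \<in> {1..n}" "z \<in> {1..n}"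
    and colours: "col u1 = col z" "col u2 = col z" "col u3 = col z"
    and eq: "i*u1 + j*u2 + (k-i-j)*u3 = a*z"
  shows "\<exists>x. is_solution (Suc k) a n x \<and> monochromatic col (Suc k) x"
proof -
  define x where
    "x = (\<lambda>p. if p < i then u1 else if p < i+j then u2 else if p < k then u3 else z)"
  have "(\<Sum>p<k. x p) = (\<Sum>p\<in>{0..<i}. x p) + (\<Sum>p\<in>{i..<i+j}. x p) + (\<Sum>p\<in>{i+j..<k}. x p)"
    using ij by (simp add: lessThan_atLeast0 sum.atLeastLessThan_concat)
  also have "(\<Sum>p\<in>{0..<i}. x p) = (\<Sum>p\<in>{0..<i}. u1)" by (rule sum.cong) (auto simp: x_def)
  also have "(\<Sum>p\<in>{i..<i+j}. x p) = (\<Sum>p\<in>{i..<i+j}. u2)" by (rule sum.cong) (auto simp: x_def)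
  also have "(\<Sum>p\<in>{i+j..<k}. x p) = (\<Sum>p\<in>{i+j..<k}. u3)" by (rule sum.cong) (auto simp: x_def)
  finally have "(\<Sum>p<k. x p) = a*z" using eq by (simp add: mult.commute)
  then show ?thesis
    using range colours ij
    by (intro exI[of _ x]) (auto simp: is_solution_def monochromatic_def x_def)
qed

text \<open>Any s between n*lo and n*hi (n > 0) is a sum of n numbers from [lo,hi]; two distinct
  values suffice, namely floor(s/n) and possibly floor(s/n)+1.\<close>
lemma sum_of_values_in_interval:
  fixes n lo hi s :: nat
  assumes "0 < n" "n*lo \<le> s" "s \<le> n*hi"
  shows "\<exists>u v j. u \<in> {lo..hi} \<and> v \<in> {lo..hi} \<and> j \<le> n \<and> j*u + (n-j)*v = s"
proof -
  define b where "b = s div n"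
  define e where "e = s mod n"
  have s: "s = n*b + e" by (simp add: b_def e_def)
  have en: "e < n" using assms(1) by (simp add: e_def)
  have "n*lo < n*(b+1)" using s en assms(2) by (simp add: algebra_simps)
  then have lob: "lo \<le> b" using mult_less_cancel1[of n lo "b+1"] by simp
  show ?thesis
  proof (cases "e = 0")
    case True
    then have "b \<le> hi" using s assms(1,3) by simp
    then show ?thesis using True s lob by (intro exI[of _ b] exI[of _ b] exI[of _ 0]) auto
  next
    case False
    then have "n*b < n*hi" using s assms(3) by linarith
    then have "b < hi" by simp
    moreover have "e*(b+1) + (n-e)*b = s" using s en by (simp add: algebra_simps diff_mult_distrib)
    ultimately show ?thesis using lob en by (intro exI[of _ "b+1"] exI[of _ b] exI[of _ e]) auto
  qed
qed

lemma solution_from_interval: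
  assumes interval: "\<forall>y\<in>{lo..hi}. col y = c" and "1 \<le> lo" "hi \<le> n"
    and "col w = c" "col z = c" "w \<in> {1..n}" "z \<in> {1..n}" "i < k"
    and lower: "i*w + (k-i)*lo \<le> a*z" and upper: "a*z \<le> i*w + (k-i)*hi"
  shows "\<exists>x. is_solution (Suc k) a n x \<and> monochromatic col (Suc k) x"
proof -
  obtain u v j where uv: "u \<in> {lo..hi}" "v \<in> {lo..hi}" and j: "j \<le> k - i"
    and sum: "j*u + (k-i-j)*v = a*z - i*w"
  proof -
    have "(k-i)*lo \<le> a*z - i*w" "a*z - i*w \<le> (k-i)*hi" using lower upper by linarith+
    then show ?thesis
      using sum_of_values_in_interval[of "k-i" lo "a*z - i*w" hi] \<open>i < k\<close> that by auto
  qed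
  have "col u = col z" "col v = col z" using uv interval assms(5) by auto
  moreover have "u \<in> {1..n}" "v \<in> {1..n}" using uv assms(2,3) by auto
  moreover have "i*w + j*u + (k-i-j)*v = a*z" using sum lower by simp
  ultimately show ?thesis
    using assms(4-8) j by (intro solution_from_three_values[of i j k w n u v z col a]) auto
qed

lemma ceil_div_bounds:
  fixes p b :: nat
  assumes b: "0 < b"
  shows "p \<le> b * ceil_div p b" "b * ceil_div p b < p + b"
proof -
  define c where "c = ceiling (real p / real b)"
  have "0 \<le> real p / real b" by simp
  then have c0: "0 \<le> c" unfolding c_def by linarith
  have h1: "real p / real b \<le> of_int c" and h2: "of_int c - 1 < real p / real b"
    using ceiling_correct[of "real p / real b"] by (auto simp: c_def)
  have rc: "real (ceil_div p b) = of_int c" using c0 by (simp add: ceil_div_def c_def)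
  have "real p \<le> real b * real (ceil_div p b)"
    using h1 b rc by (simp add: divide_le_eq mult.commute)
  then show "p \<le> b * ceil_div p b" by (metis of_nat_le_iff of_nat_mult)
  have "real b * real (ceil_div p b) < real p + real b"
    using h2 b rc by (simp add: less_divide_eq algebra_simps)
  then show "b * ceil_div p b < p + b" by (metis of_nat_add of_nat_less_iff of_nat_mult)
qed

lemma Cma_eq_ceil_div: "Cma m a = ceil_div ((m-1) * ceil_div (m-1) a) a"
  unfolding Cma_def ceil_div_def by (simp add: field_simps)

lemma residue_in_window:
  fixes a L S :: nat
  assumes "0 < a"
  shows "\<exists>y. L \<le> y \<and> y \<le> L + (a-1) \<and> a dvd S + y"
proof -
  define y where "y = L + (a-1) - (S + L + (a-1)) mod a"
  have r: "(S + L + (a-1)) mod a \<le> a - 1"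
    using mod_less_divisor[OF assms, of "S + L + (a-1)"] by linarith
  have "S + y = S + L + (a-1) - (S + L + (a-1)) mod a" using r unfolding y_def by simp
  then have "a dvd S + y" by (simp add: minus_mod_eq_mult_div)
  then show ?thesis using r by (intro exI[of _ y]) (auto simp: y_def)
qed

text \<open>The two polynomial inequalities behind steps (2) and (5).  After substituting
  a = f+3, k = 2f^2+11f+16+e (i.e. k >= 2a^2-a+1) and the lower bound on the remaining
  variable, the difference of the two sides is a polynomial with nonnegative coefficients.\<close>
lemma red_step_inequality:
  fixes a k r :: nat
  assumes "3 \<le> a" "2*a*a + 1 \<le> k + a" "a - 1 \<le> r"
  shows "a*(a-2)*(k-1)*(r+1) + (a-2)*(a-1)*k \<le> a*a*(k-2)*r"
proof -
  define f where "f = a - 3"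
  have fa: "a = f + 3" using assms(1) by (simp add: f_def)
  define e where "e = k - (2*f*f + 11*f + 16)"
  have "2*a*a = 2*f*f + 12*f + 18" unfolding fa by (simp add: algebra_simps)
  then have ke: "k = 2*f*f + 11*f + 16 + e" using assms(2) fa by (simp add: e_def)
  define d where "d = r - (f + 2)"
  have rd: "r = f + 2 + d" using assms(3) fa by (simp add: d_def)
  have "int (a*(a-2)*(k-1)*(r+1) + (a-2)*(a-1)*k)
          + int (5*f^3 + 4*d*f^3 + 38*f^2 + 33*d*f^2 + 98*f + 90*d*f + 3*e*f + 2*d*e*f
                 + 85 + 81*d + 7*e + 6*d*e)
        = int (a*a*(k-2)*r)"
    unfolding fa ke rd by (simp add: algebra_simps power3_eq_cube power2_eq_square)
  then show ?thesis by linarith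
qed

lemma final_inequality:
  fixes a k q :: nat
  assumes "3 \<le> a" "2*a*a + 1 \<le> k + a" "2*a \<le> q"
  shows "(a-1)*(k*q + a - 1) \<le> a*(k-1)*(q-1)"
proof -
  define f where "f = a - 3"
  have fa: "a = f + 3" using assms(1) by (simp add: f_def)
  define e where "e = k - (2*f*f + 11*f + 16)"
  have "2*a*a = 2*f*f + 12*f + 18" unfolding fa by (simp add: algebra_simps)
  then have ke: "k = 2*f*f + 11*f + 16 + e" using assms(2) fa by (simp add: e_def)
  define g where "g = q - (2*f + 6)"
  have qg: "q = 2*f + 6 + g" using assms(3) fa by (simp add: g_def)
  have "int ((a-1)*(k*q + a - 1))
          + int (2*f^3 + 14*f^2 + 2*f^2*g + 34*f + 10*f*g + e*f + 29 + 13*g + 3*e + e*g)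
        = int (a*(k-1)*(q-1))"
    unfolding fa ke qg by (simp add: algebra_simps power3_eq_cube power2_eq_square)
  then show ?thesis by linarith
qed

locale colouring_without_solution =
  fixes a k :: nat and col :: "nat \<Rightarrow> bool"
  assumes a_ge_3: "3 \<le> a"
    and k_large: "2*a*a + 1 \<le> k + a"
    and red_a2: "col (a-2)" and red_a1: "col (a-1)"
    and no_solution:
      "\<not> (\<exists>x. is_solution (Suc k) a (Cma (Suc k) a) x \<and> monochromatic col (Suc k) x)"
begin

definition q :: nat where "q = ceil_div k a"

definition C :: nat where "C = ceil_div (k*q) a"

lemma C_eq_Cma: "C = Cma (Suc k) a"
  by (simp add: C_def q_def Cma_eq_ceil_div)

lemma a_pos: "0 < a"
  using a_ge_3 by simp

lemma k_ge_square: "a*a \<le> k"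
proof -
  have "a \<le> a*a" using a_pos by simp
  then show ?thesis using k_large by linarith
qed

lemma k_ge_3a: "3*a \<le> k"
proof -
  have "3*a \<le> a*a" using a_ge_3 by simp
  then show ?thesis using k_ge_square by linarith
qed

lemma q_bounds: "k \<le> a*q" "a*q < k + a"
  using ceil_div_bounds[OF a_pos, of k] by (simp_all add: q_def)

lemma C_bounds: "k*q \<le> a*C" "a*C < k*q + a"
  using ceil_div_bounds[OF a_pos, of "k*q"] by (simp_all add: C_def)

lemma q_ge: "2*a \<le> q"
proof -
  have "a*(2*a) < a*(q+1)" using q_bounds k_large by (simp add: algebra_simps)
  then show ?thesis using mult_less_cancel1[of a "2*a" "q+1"] by simp
qed

lemma q_le_k: "q \<le> k"
proof -
  have "k \<le> a*k" using a_pos by simp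
  then have "a*q < a*k + a" using q_bounds(2) by linarith
  then have "a*q < a*(k+1)" by (simp add: algebra_simps)
  then show ?thesis using mult_less_cancel1[of a q "k+1"] by simp
qed

lemma C_ge: "2*k \<le> C"
proof -
  have "a*(2*k) \<le> k*q" using q_ge by (metis mult.commute mult.left_commute mult_le_mono2)
  then have "a*(2*k) \<le> a*C" using C_bounds(1) by linarith
  then show ?thesis using mult_le_cancel1[of a "2*k" C] a_pos by simp
qed

lemma no_interval_solution:
  assumes "\<forall>y\<in>{lo..hi}. col y = c" "1 \<le> lo" "hi \<le> C"
    and "col w = c" "col z = c" "w \<in> {1..C}" "z \<in> {1..C}" "i < k"
    and "i*w + (k-i)*lo \<le> a*z" "a*z \<le> i*w + (k-i)*hi"
  shows False
  using solution_from_interval[OF assms] no_solution C_eq_Cma by simp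

lemma no_three_value_solution:
  assumes "i + j \<le> k" "u1 \<in> {1..C}" "u2 \<in> {1..C}" "u3 \<in> {1..C}" "z \<in> {1..C}"
    and "col u1 = col z" "col u2 = col z" "col u3 = col z"
    and "i*u1 + j*u2 + (k-i-j)*u3 = a*z"
  shows False
  using solution_from_three_values[OF assms] no_solution C_eq_Cma by simp

text \<open>If [lo,hi] is monochromatic then z with k*lo <= a*z <= k*hi gets the other colour:
  otherwise k numbers from [lo,hi] would sum to a*z.\<close>
lemma opposite_colour:
  assumes interval: "\<forall>y\<in>{lo..hi}. col y = c" and "1 \<le> lo" "hi \<le> C"
    and "z \<le> C" "k*lo \<le> a*z" "a*z \<le> k*hi"
  shows "col z \<noteq> c"
proof
  assume "col z = c"
  have "k \<le> a*z" using assms(2,5) by (metis le_trans mult.right_neutral mult_le_mono2)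
  then have "1 \<le> z" using k_ge_3a a_ge_3 by (cases z) auto
  then show False
    using assms \<open>col z = c\<close> k_ge_3a a_ge_3
    by (intro no_interval_solution[of lo hi c z z 0]) auto
qed

lemma red_pair: "\<forall>x\<in>{a-2..a-1}. col x = True"
proof -
  have "x = a-2 \<or> x = a-1" if "x \<in> {a-2..a-1}" for x using that a_ge_3 by auto
  then show ?thesis using red_a2 red_a1 by blast
qed

lemma blue_window:
  assumes "k*(a-2) \<le> a*y" "a*y \<le> k*(a-1)"
  shows "\<not> col y"
proof -
  have "k*(a-1) \<le> k*a" by (rule mult_le_mono2) simp
  then have "a*y \<le> a*k" using assms(2) by (metis le_trans mult.commute)
  then have "y \<le> C" using a_pos C_ge by simp
  then show ?thesis
    using opposite_colour[OF red_pair] assms a_ge_3 k_ge_3a C_ge by auto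
qed

text \<open>The blue window is long enough to meet every residue class modulo a.\<close>
lemma window_residue:
  obtains y where "k*(a-2) \<le> a*y" "a*y \<le> k*(a-1)" "a dvd S + y"
proof -
  define L where "L = ceil_div (k*(a-2)) a"
  obtain y where y: "L \<le> y" "y \<le> L + (a-1)" "a dvd S + y"
    using residue_in_window[OF a_pos] by blast
  have L: "k*(a-2) \<le> a*L" "a*L < k*(a-2) + a"
    using ceil_div_bounds[OF a_pos, of "k*(a-2)"] by (simp_all add: L_def)
  have "a*y \<le> a*L + a*(a-1)" using mult_le_mono2[OF y(2), of a] by (simp add: distrib_left)
  also have "\<dots> \<le> k*(a-2) + a*a" using L(2) a_pos by (simp add: algebra_simps)
  also have "\<dots> \<le> k*(a-2) + k" using k_ge_square by simp
  also have "\<dots> = k*(a-1)" using a_ge_3 by (simp add: algebra_simps diff_mult_distrib2)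
  finally have "a*y \<le> k*(a-1)" .
  moreover have "k*(a-2) \<le> a*y" using L(1) y(1) by (meson le_trans mult_le_mono2)
  ultimately show ?thesis using that y(3) by blast
qed

text \<open>Arithmetic core of step (2): if a t = (k-1)(r+1) + y with y in the blue window and
  r >= a-1, then a t exceeds 2t by an amount that k-2 numbers from [a-2,r] can realise.\<close>
lemma red_step_bounds:
  assumes at: "a*t = (k-1)*(r+1) + y" and y: "a*y \<le> k*(a-1)" and r: "a - 1 \<le> r"
  shows "2*t + (k-2)*(a-2) \<le> a*t" "a*t \<le> 2*t + (k-2)*r"
proof -
  have "a = 2 + (a-2)" using a_ge_3 by simp
  then have split: "a*t = 2*t + (a-2)*t" by (metis add_mult_distrib)
  have "a*(k-1) \<le> (r+1)*(k-1)" using r by (intro mult_le_mono1) simp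
  then have "a*(k-1) \<le> a*t" using at by (simp add: mult.commute)
  then have "k-2 \<le> t" using a_pos by simp
  then have "(k-2)*(a-2) \<le> (a-2)*t" by (simp add: mult.commute)
  then show "2*t + (k-2)*(a-2) \<le> a*t" using split by simp
  have "a*(a*((a-2)*t)) = a*(a-2)*(a*t)" by (simp add: mult_ac)
  also have "\<dots> = a*(a-2)*(k-1)*(r+1) + (a-2)*(a*y)"
    unfolding at by (simp add: distrib_left mult_ac)
  also have "\<dots> \<le> a*(a-2)*(k-1)*(r+1) + (a-2)*(a-1)*k"
    using mult_le_mono2[OF y, of "a-2"] by (simp add: mult_ac)
  also have "\<dots> \<le> a*(a*((k-2)*r))"
    using red_step_inequality[OF a_ge_3 k_large r] by (simp add: mult_ac)
  finally have "(a-2)*t \<le> (k-2)*r" using a_pos by simp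
  then show "a*t \<le> 2*t + (k-2)*r" using split by simp
qed

text \<open>Otherwise
  pick y in the blue window with a | (k-1)(r+1) + y =: a t.  Then k-1 copies of r+1 and y
  form a blue solution if t is blue, and two copies of t and k-2 numbers from [a-2,r] form
  a red solution if t is red.\<close>
lemma red_extend:
  assumes red: "\<forall>x\<in>{a-2..r}. col x" and r: "a - 1 \<le> r" "r + 1 < q"
  shows "col (r+1)"
proof (rule ccontr)
  assume blue: "\<not> col (r+1)"
  obtain y where y: "k*(a-2) \<le> a*y" "a*y \<le> k*(a-1)" and dvd: "a dvd (k-1)*(r+1) + y"
    using window_residue .
  obtain t where "(k-1)*(r+1) + y = a*t" using dvd by (rule dvdE)
  then have at: "a*t = (k-1)*(r+1) + y" by simp
  have "1 \<le> a - 2" using a_ge_3 by simp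
  then have "k*1 \<le> k*(a-2)" by (rule mult_le_mono2)
  then have "k \<le> a*y" using y(1) by linarith
  then have y1: "1 \<le> y" using k_ge_3a a_ge_3 by (cases y) auto
  have "k*(a-1) \<le> a*k" by (simp add: mult.commute)
  then have "a*y \<le> a*k" using y(2) by linarith
  then have yk: "y \<le> k" using a_pos by simp
  have "(k-1)*(r+1) \<le> k*(r+1)" by (rule mult_le_mono1) simp
  then have "a*t \<le> k*(r+2)" using at yk by simp
  also have "\<dots> \<le> k*q" using r(2) by (intro mult_le_mono2) simp
  also have "\<dots> \<le> a*C" by (rule C_bounds(1))
  finally have "t \<le> C" using a_pos by simp
  moreover have "1 \<le> t" using at y1 by (cases t) auto
  ultimately have t_range: "t \<in> {1..C}" by simp
  have y_range: "y \<in> {1..C}" using y1 yk C_ge by simp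
  have r_range: "r + 1 \<in> {1..C}" "r \<le> C" using r(2) q_le_k C_ge by auto
  show False
  proof (cases "col t")
    case False
    then have colours: "col (r+1) = col t" "col y = col t" using blue blue_window[OF y] by simp_all
    have counts: "(k-1) + 1 \<le> k" using k_ge_3a a_ge_3 by simp
    have "(k-1)*(r+1) + 1*y + (k-(k-1)-1)*y = a*t" using at k_ge_3a by simp
    from no_three_value_solution[OF counts r_range(1) y_range y_range t_range
        colours(1) colours(2) colours(2) this]
    show False .
  next
    case True
    then have colours: "col t = True" by simp
    have red': "\<forall>x\<in>{a-2..r}. col x = True" using red by simp
    have "2 < k" using k_ge_3a a_ge_3 by simp
    from no_interval_solution[OF red' \<open>1 \<le> a - 2\<close> r_range(2) colours colours t_range t_range
        this red_step_bounds[OF at y(2) r(1)]]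
    show False .
  qed
qed

lemma red_up_to: "a - 1 + d < q \<Longrightarrow> \<forall>x\<in>{a-2..a-1+d}. col x"
proof (induction d)
  case 0
  then show ?case using red_pair by simp
next
  case (Suc d)
  then have red: "\<forall>x\<in>{a-2..a-1+d}. col x" by simp
  then have "col (a-1+d+1)" using red_extend Suc.prems by simp
  then show ?case using red by (auto simp: le_Suc_eq)
qed

lemma red_middle: "\<forall>x\<in>{a-2..q-1}. col x"
  using red_up_to[of "q - a"] q_ge a_ge_3 by simp

text \<open>For blue x < a-2 put w = k-a+x: then
  (k-a+x) copies of x and a-x copies of w sum to a w, a blue solution if w is blue; and
  w lies in the window k(a-2) <= a w <= k a of the red interval [a-2,a] otherwise.\<close>
lemma red_initial: "\<forall>x\<in>{1..q-1}. col x"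
proof
  fix x assume x: "x \<in> {1..q-1}"
  show "col x"
  proof (cases "a - 2 \<le> x")
    case True
    then show ?thesis using red_middle x by simp
  next
    case False
    define w where "w = k - a + x"
    have w: "1 \<le> w" "w \<le> k" using False k_ge_3a x unfolding w_def by auto
    have "(k-a+x)*x + (a-x)*w = w*(x + (a-x))" unfolding w_def by (simp add: algebra_simps)
    then have sum: "(k-a+x)*x + (a-x)*w + (k-(k-a+x)-(a-x))*w = a*w" using False by simp
    have red: "\<forall>y\<in>{a-2..a}. col y = True" using red_middle q_ge by auto
    have e1: "a*(k-a) + a*a = a*k" using k_ge_3a by (simp add: diff_mult_distrib2)
    have e2: "k*(a-2) + 2*k = a*k" using a_ge_3 by (simp add: diff_mult_distrib2 mult.commute)
    have "a*(k-a) \<le> a*w" unfolding w_def by (rule mult_le_mono2) simp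
    then have "k*(a-2) \<le> a*w" using e1 e2 k_ge_square by linarith
    moreover have "a*w \<le> k*a" using w(2) by (simp add: mult.commute)
    ultimately have "col w \<noteq> True"
      using opposite_colour[OF red] a_ge_3 w(2) C_ge k_ge_3a by auto
    then have "\<not> col w" by simp
    have counts: "(k-a+x) + (a-x) \<le> k" using False k_ge_3a by simp
    have x_range: "x \<in> {1..C}" using x q_le_k C_ge by auto
    have w_range: "w \<in> {1..C}" using w C_ge by simp
    show ?thesis
    proof (rule ccontr)
      assume "\<not> col x"
      then have "col x = col w" using \<open>\<not> col w\<close> by simp
      then show False
        using no_three_value_solution[OF counts x_range w_range w_range w_range _ refl refl sum]
        by blast
    qed
  qed
qed

text \<open>Step (4): q and q+1 lie in the window k <= a z <= 2k of the red interval [1,2], hence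
  are blue; then C lies in the window kq <= a z <= k(q+1) of [q,q+1], hence is red.\<close>
lemma blue_pair: "\<forall>x\<in>{q..q+1}. col x = False"
proof
  fix z assume z: "z \<in> {q..q+1}"
  have red: "\<forall>y\<in>{1..2}. col y = True" using red_initial q_ge a_ge_3 by auto
  have "a*q \<le> a*z" using z by simp
  then have "k \<le> a*z" using q_bounds(1) by linarith
  moreover have "a*z \<le> k*2"
  proof -
    have "a*z \<le> a*q + a" using z mult_le_mono2[of z "q+1" a] by auto
    then show ?thesis using q_bounds(2) k_ge_3a by linarith
  qed
  moreover have "z \<le> C" using z q_le_k C_ge k_ge_3a a_ge_3 by auto
  ultimately have "col z \<noteq> True" using opposite_colour[OF red, of z] C_ge k_ge_3a a_ge_3 by auto
  then show "col z = False" by simp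
qed

lemma red_C: "col C"
proof -
  have "a*C \<le> k*(q+1)" using C_bounds(2) k_ge_3a by simp
  moreover have "1 \<le> q" "q+1 \<le> C" using a_ge_3 q_ge q_le_k C_ge k_ge_3a by auto
  ultimately have "col C \<noteq> False" using opposite_colour[OF blue_pair] C_bounds(1) by blast
  then show ?thesis by simp
qed

text \<open>Step (5): C, C and k-1 numbers from the red interval [a-2, q-1] sum to a C.\<close>
lemma colouring_impossible: False
proof -
  have "(k-1)*(a-2) \<le> k*(a-1)" by (intro mult_le_mono) auto
  also have "\<dots> \<le> C*(a-1)" using C_ge by (intro mult_le_mono1) simp
  also have "\<dots> = a*C - 1*C" by (simp only: mult.commute[of C] diff_mult_distrib)
  finally have "(k-1)*(a-2) \<le> a*C - 1*C" .
  moreover have "1*C \<le> a*C" using a_pos by simp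
  ultimately have lower: "1*C + (k-1)*(a-2) \<le> a*C" by linarith
  have "a*((a-1)*C) = (a-1)*(a*C)" by simp
  also have "\<dots> \<le> (a-1)*(k*q + a - 1)" using C_bounds(2) by (intro mult_le_mono2) simp
  also have "\<dots> \<le> a*(k-1)*(q-1)" using final_inequality[OF a_ge_3 k_large q_ge] .
  finally have "(a-1)*C \<le> (k-1)*(q-1)" using a_pos by (simp add: mult.assoc)
  then have upper: "a*C \<le> 1*C + (k-1)*(q-1)" by (simp add: diff_mult_distrib)
  have red: "\<forall>x\<in>{a-2..q-1}. col x = True" using red_middle by simp
  have ranges: "1 \<le> a-2" "q-1 \<le> C" "C \<in> {1..C}" "1 < k"
    using a_ge_3 q_le_k C_ge k_ge_3a by auto
  have "col C = True" using red_C by simp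
  from no_interval_solution[OF red ranges(1,2) this this ranges(3,3,4) lower upper]
  show False .
qed

end

theorem proposition3:
  fixes a m :: nat and col :: "nat \<Rightarrow> bool"
  assumes "a \<ge> 3"
    and "m \<ge> 2 * a^2 - a + 2"
    and "col (a - 2)" and "col (a - 1)"
  shows "\<exists>x. is_solution m a (Cma m a) x \<and> monochromatic col m x"
proof (rule ccontr)
  assume no_solution: "\<not> ?thesis"
  define k where "k = m - 1"
  have "a \<le> 2*a^2" by (simp add: power2_eq_square)
  then have m: "m = Suc k" and k: "2*a*a + 1 \<le> k + a"
    using assms(2) by (simp_all add: k_def power2_eq_square)
  have "\<not> (\<exists>x. is_solution (Suc k) a (Cma (Suc k) a) x \<and> monochromatic col (Suc k) x)"
    using no_solution m by simp
  then interpret colouring_without_solution a k col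
    using assms(1,3,4) k by unfold_locales
  show False by (rule colouring_impossible)
qed

end
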